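(* Let $\mathbb{F}$ be a field and $n\ge 0$ an integer with $|\mathbb{F}| \geq 2n-1$. Let $V$ be an $\mathbb{F}$-vector space of dimension $2n$, and let $s$ be a symplectic form on $V$. Let $\mathcal{S}$ be a linear subspace of $\mathcal{A}_s$ that has trivial spectrum. Then $\dim \mathcal{S} \leq n(n-1)$.
   Context: A bilinear form $b$ on $V$ is alternating if $b(x,x)=0$ for all $x\in V$, and symplectic if it is alternating and non-degenerate. $\mathcal{A}_s$ denotes the space of all $s$-alternating endomorphisms of $V$, i.e. endomorphisms $u$ of $V$ such that $s(x,u(x))=0$ for all $x\in V$. An endomorphism $u$ has trivial spectrum if it has no nonzero eigenvalue in $\mathbb{F}$; a linear subspace of endomorphisms has trivial spectrum if all its elements have trivial spectrum. The field $\mathbb{F}$ may have any characteristic, including 2. *)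

theory Defs
  imports Complex_Main "HOL-Library.Function_Algebras"
begin

definition bilinear_form :: "('a::field \<Rightarrow> 'v::ab_group_add \<Rightarrow> 'v) \<Rightarrow> ('v \<Rightarrow> 'v \<Rightarrow> 'a) \<Rightarrow> bool" where
  "bilinear_form scale b \<longleftrightarrow>
     (\<forall>x. Vector_Spaces.linear scale (*) (b x)) \<and>
     (\<forall>y. Vector_Spaces.linear scale (*) (\<lambda>x. b x y))"

definition alternating_form :: "('a::field \<Rightarrow> 'v::ab_group_add \<Rightarrow> 'v) \<Rightarrow> ('v \<Rightarrow> 'v \<Rightarrow> 'a) \<Rightarrow> bool" where
  "alternating_form scale b \<longleftrightarrow> bilinear_form scale b \<and> (\<forall>x. b x x = 0)"

definition nondegenerate_form :: "('v::ab_group_add \<Rightarrow> 'v \<Rightarrow> 'a::field) \<Rightarrow> bool" where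
  "nondegenerate_form b \<longleftrightarrow> (\<forall>x. (\<forall>y. b x y = 0) \<longrightarrow> x = 0)"

definition symplectic_form :: "('a::field \<Rightarrow> 'v::ab_group_add \<Rightarrow> 'v) \<Rightarrow> ('v \<Rightarrow> 'v \<Rightarrow> 'a) \<Rightarrow> bool" where
  "symplectic_form scale s \<longleftrightarrow> alternating_form scale s \<and> nondegenerate_form s"

definition alt_endos :: "('a::field \<Rightarrow> 'v::ab_group_add \<Rightarrow> 'v) \<Rightarrow> ('v \<Rightarrow> 'v \<Rightarrow> 'a) \<Rightarrow> ('v \<Rightarrow> 'v) set" where
  "alt_endos scale s = {u. Vector_Spaces.linear scale scale u \<and> (\<forall>x. s x (u x) = 0)}"

definition fun_scale :: "('a::field \<Rightarrow> 'v::ab_group_add \<Rightarrow> 'v) \<Rightarrow> 'a \<Rightarrow> ('v \<Rightarrow> 'v) \<Rightarrow> ('v \<Rightarrow> 'v)" where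
  "fun_scale scale c f = (\<lambda>x. scale c (f x))"

definition is_eigenvalue :: "('a::field \<Rightarrow> 'v::ab_group_add \<Rightarrow> 'v) \<Rightarrow> ('v \<Rightarrow> 'v) \<Rightarrow> 'a \<Rightarrow> bool" where
  "is_eigenvalue scale u c \<longleftrightarrow> (\<exists>x. x \<noteq> 0 \<and> u x = scale c x)"

definition trivial_spectrum :: "('a::field \<Rightarrow> 'v::ab_group_add \<Rightarrow> 'v) \<Rightarrow> ('v \<Rightarrow> 'v) \<Rightarrow> bool" where
  "trivial_spectrum scale u \<longleftrightarrow> (\<forall>c. c \<noteq> 0 \<longrightarrow> \<not> is_eigenvalue scale u c)"

end

theory Submission
  imports Defs
begin

(* Induction on n, for a nondegenerate subspace W of dimension 2n and a space R of s-alternating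
   maps of W with trivial spectrum. Choose x, y in W with s x y = 1 and let W' be the
   s-orthogonal of {x, y} in W. Evaluation at x, followed by compressing the maps that kill x
   to W', gives dim R <= dim R x + dim C + dim R', where R' is a space of the same kind on W'
   and C is the set of c in W' for which the rank-two map z |-> s x z c - s c z x lies in R.
   The key point is that R x and C are s-orthogonal: for v in R and c in C, solve
   (l - v) w_l = c for 2n - 2 nonzero scalars l (this is where |F| >= 2n - 1 is used). The
   vectors c and w_l lie in the (2n - 2)-dimensional space {x, c}^perp, and they would be
   independent unless v c lies in their span; hence s x (v c) = 0. As neither R x nor C
   contains x, this gives dim R x + dim C <= 2n - 2, and so
   dim R <= 2(n - 1) + (n - 1)(n - 2) = n(n - 1). *)

lemma ex_nonzero_subset_card:
  assumes "infinite (UNIV :: 'a::zero set) \<or> m < card (UNIV :: 'a set)"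
  obtains L :: "'a::zero set" where "finite L" "0 \<notin> L" "card L = m"
proof (cases "finite (UNIV :: 'a set)")
  case False
  then have "infinite (UNIV - {0 :: 'a})" by simp
  then obtain L :: "'a set" where "finite L" "card L = m" "L \<subseteq> UNIV - {0}"
    using infinite_arbitrarily_large by blast
  then show thesis using that by blast
next
  case True
  then have "m \<le> card (UNIV - {0 :: 'a})" using assms by (simp add: card_Diff_subset)
  then obtain L :: "'a set" where "L \<subseteq> UNIV - {0}" "card L = m" "finite L"
    by (rule obtain_subset_with_card_n)
  then show thesis using that by blast
qed

lemma (in vector_space_pair) dim_le_dim_image_add_dim_kernel:
  assumes lin: "Vector_Spaces.linear s1 s2 g" and S: "vs1.subspace S"
  shows "vs1.dim S \<le> vs2.dim (g ` S) + vs1.dim {v\<in>S. g v = 0}"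
proof -
  interpret g: Vector_Spaces.linear s1 s2 g by (rule lin)
  obtain BS where BS: "BS \<subseteq> S" "vs1.independent BS" "S \<subseteq> vs1.span BS" "card BS = vs1.dim S"
    using vs1.basis_exists by blast
  show ?thesis
  proof (cases "finite BS")
    case False
    \<comment> \<open>\<open>S\<close> is infinite-dimensional, and its \<open>dim\<close> is the \<open>card\<close> of an infinite set, i.e. \<open>0\<close>.\<close>
    then show ?thesis using BS(4) by simp
  next
    case True
    define K where "K = {v\<in>S. g v = 0}"
    obtain BK where BK: "BK \<subseteq> K" "vs1.independent BK" "K \<subseteq> vs1.span BK" "card BK = vs1.dim K"
      using vs1.basis_exists by blast
    have "finite BK"
      using vs1.independent_span_bound[OF True BK(2)] BK(1) BS(3) unfolding K_def by auto
    obtain BI where BI: "BI \<subseteq> g ` S" "vs2.independent BI" "g ` S \<subseteq> vs2.span BI"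
        "card BI = vs2.dim (g ` S)"
      using vs2.basis_exists by blast
    have "g ` S \<subseteq> vs2.span (g ` BS)"
      using BS(3) g.span_image by auto
    then have "finite BI"
      using vs2.independent_span_bound[OF finite_imageI[OF True] BI(2)] BI(1) by blast
    have "\<forall>b\<in>BI. \<exists>a\<in>S. g a = b" using BI(1) by auto
    then obtain h where h: "\<And>b. b \<in> BI \<Longrightarrow> h b \<in> S \<and> g (h b) = b" by metis
    have "S \<subseteq> vs1.span (BK \<union> h ` BI)"
    proof
      fix v assume v: "v \<in> S"
      then obtain a where a: "g v = (\<Sum>b\<in>BI. s2 (a b) b)"
        using BI(3) vs2.span_finite[OF \<open>finite BI\<close>] by blast
      define v' where "v' = (\<Sum>b\<in>BI. s1 (a b) (h b))"
      have v'_S: "v' \<in> S" unfolding v'_def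
        by (intro vs1.subspace_sum[OF S] vs1.subspace_scale[OF S]) (use h in auto)
      have "g v' = g v" using a h unfolding v'_def by (simp add: g.sum g.scale)
      then have "v - v' \<in> K" unfolding K_def using v v'_S vs1.subspace_diff[OF S] by (auto simp: g.diff)
      then have "v - v' \<in> vs1.span (BK \<union> h ` BI)"
        using BK(3) vs1.span_mono[of BK "BK \<union> h ` BI"] by auto
      moreover have "v' \<in> vs1.span (BK \<union> h ` BI)" unfolding v'_def
        by (intro vs1.span_sum vs1.span_scale vs1.span_base) auto
      ultimately have "(v - v') + v' \<in> vs1.span (BK \<union> h ` BI)" by (rule vs1.span_add)
      then show "v \<in> vs1.span (BK \<union> h ` BI)" by simp
    qed
    then have "vs1.dim S \<le> card (BK \<union> h ` BI)"
      using vs1.dim_le_card \<open>finite BK\<close> \<open>finite BI\<close> by blast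
    also have "\<dots> \<le> card BK + card BI"
      using card_Un_le[of BK "h ` BI"] card_image_le[OF \<open>finite BI\<close>, of h] by linarith
    finally show ?thesis using BK(4) BI(4) K_def by simp
  qed
qed

lemma (in vector_space) finite_dimensional_if_finite_span:
  assumes "finite B" "span B = UNIV"
  obtains Basis where "finite_dimensional_vector_space scale Basis"
proof -
  obtain Basis where Basis: "Basis \<subseteq> B" "independent Basis" "B \<subseteq> span Basis"
    using maximal_independent_subset[of B] by blast
  have "span Basis = UNIV"
    using span_mono[OF Basis(3)] assms(2) by (simp add: span_span top.extremum_unique)
  moreover have "finite Basis" using assms(1) Basis(1) finite_subset by blast
  ultimately have "finite_dimensional_vector_space scale Basis"
    using Basis(2) by (intro finite_dimensional_vector_space.intro vector_space_axioms
        finite_dimensional_vector_space_axioms.intro)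
  then show thesis by (rule that)
qed

context vector_space
begin

lemma resolvent_relation_trivial:
  assumes g: "Vector_Spaces.linear scale scale g" and "finite L"
    and w: "\<And>l. l \<in> L \<Longrightarrow> scale l (w l) - g (w l) = c"
    and "g c \<notin> span (insert c (w ` L))" and "c \<noteq> 0"
    and "scale b c + (\<Sum>l\<in>L. scale (a l) (w l)) = 0"
  shows "b = 0 \<and> (\<forall>l\<in>L. a l = 0)"
  using \<open>finite L\<close> w assms(4,6)
proof (induction L arbitrary: a b rule: finite_induct)
  case empty
  then show ?case using \<open>c \<noteq> 0\<close> by simp
next
  case (insert \<mu> L)
  interpret g: Vector_Spaces.linear scale scale g by (rule g)
  define G where "G z = scale \<mu> z - g z" for z
  interpret G: Vector_Spaces.linear scale scale G
    unfolding G_def Vector_Spaces.linear_iff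
    by (simp add: vector_space_axioms g.add g.scale algebra_simps scale_right_diff_distrib)
  have notin: "g c \<notin> span (insert c (w ` L))"
    using insert.prems(2) span_mono[of "insert c (w ` L)" "insert c (w ` insert \<mu> L)"] by blast
  have G_w: "G (w l) = scale (\<mu> - l) (w l) + c" if "l \<in> L" for l
  proof -
    have "g (w l) = scale l (w l) - c" using insert.prems(1) that by (simp add: algebra_simps)
    then show ?thesis unfolding G_def by (simp add: algebra_simps scale_left_diff_distrib)
  qed
  have G_w\<mu>: "G (w \<mu>) = c" unfolding G_def using insert.prems(1) by simp
  define T where "T = (\<Sum>l\<in>L. scale (a l * (\<mu> - l)) (w l))"
  define \<sigma> where "\<sigma> = (\<Sum>l\<in>L. a l)"
  \<comment> \<open>\<open>G\<close> maps \<open>w \<mu>\<close> to \<open>c\<close> and \<open>w l\<close> to \<open>(\<mu> - l) w l + c\<close>: applied to the relation it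
    eliminates \<open>w \<mu>\<close>.\<close>
  have "G (\<Sum>l\<in>L. scale (a l) (w l)) = (\<Sum>l\<in>L. scale (a l * (\<mu> - l)) (w l) + scale (a l) c)"
    by (simp add: G.sum G.scale G_w scale_right_distrib)
  also have "\<dots> = T + scale \<sigma> c"
    unfolding T_def \<sigma>_def by (simp add: sum.distrib scale_sum_left)
  finally have G_sum: "G (\<Sum>l\<in>L. scale (a l) (w l)) = T + scale \<sigma> c" .
  have "scale b c + scale (a \<mu>) (w \<mu>) + (\<Sum>l\<in>L. scale (a l) (w l)) = 0"
    using insert.prems(3) insert.hyps by (simp add: add.assoc)
  then have "G (scale b c + scale (a \<mu>) (w \<mu>) + (\<Sum>l\<in>L. scale (a l) (w l))) = 0"
    by (simp add: G.zero)
  then have "scale b (scale \<mu> c - g c) + scale (a \<mu>) c + (T + scale \<sigma> c) = 0"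
    by (simp add: G.add G.scale G_w\<mu> G_sum) (simp add: G_def)
  then have "scale b (g c)
      = scale b (g c) + (scale b (scale \<mu> c - g c) + scale (a \<mu>) c + (T + scale \<sigma> c))"
    by simp
  also have "\<dots> = scale (b * \<mu> + a \<mu> + \<sigma>) c + T"
    by (simp add: algebra_simps scale_right_diff_distrib scale_left_distrib)
  finally have b_gc: "scale b (g c) = scale (b * \<mu> + a \<mu> + \<sigma>) c + T" .
  have b: "b = 0"
  proof (rule ccontr)
    assume "b \<noteq> 0"
    have "scale (b * \<mu> + a \<mu> + \<sigma>) c + T \<in> span (insert c (w ` L))"
      unfolding T_def by (intro span_add span_scale span_sum span_base) auto
    then have "scale (1 / b) (scale b (g c)) \<in> span (insert c (w ` L))"
      using b_gc span_scale by metis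
    then show False using notin \<open>b \<noteq> 0\<close> by simp
  qed
  have "scale (a \<mu> + \<sigma>) c + (\<Sum>l\<in>L. scale (a l * (\<mu> - l)) (w l)) = 0"
    using b_gc b unfolding T_def by (simp add: scale_left_distrib add.commute)
  then have IH: "a \<mu> + \<sigma> = 0 \<and> (\<forall>l\<in>L. a l * (\<mu> - l) = 0)"
    by (rule insert.IH[rotated, OF notin]) (use insert.prems(1) in simp)
  then have "\<forall>l\<in>L. a l = 0" using insert.hyps(2) by auto
  moreover from this have "a \<mu> = 0" using IH unfolding \<sigma>_def by simp
  ultimately show ?case using b by simp
qed

lemma resolvent_family_independent:
  assumes g: "Vector_Spaces.linear scale scale g" and L: "finite L"
    and w: "\<And>l. l \<in> L \<Longrightarrow> scale l (w l) - g (w l) = c"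
    and notin: "g c \<notin> span (insert c (w ` L))" and c: "c \<noteq> 0"
  shows "independent (insert c (w ` L))" and "card (insert c (w ` L)) = Suc (card L)"
proof -
  interpret g: Vector_Spaces.linear scale scale g by (rule g)
  have inj: "inj_on w L"
  proof
    fix l l' assume l: "l \<in> L" and l': "l' \<in> L" and eq: "w l = w l'"
    have "scale l (w l) - g (w l) = scale l' (w l) - g (w l)" using w[OF l] w[OF l'] eq by simp
    then have "scale (l - l') (w l) = 0" by (simp add: scale_left_diff_distrib)
    moreover have "w l \<noteq> 0" using w[OF l] c by (auto simp: g.zero)
    ultimately show "l = l'" by simp
  qed
  have c_notin: "c \<notin> w ` L"
  proof
    assume "c \<in> w ` L"
    then obtain l where "l \<in> L" "w l = c" by auto
    then have "g c = scale (l - 1) c" using w[of l] by (simp add: algebra_simps scale_left_diff_distrib)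
    moreover have "scale (l - 1) c \<in> span (insert c (w ` L))" by (intro span_scale span_base) simp
    ultimately show False using notin by simp
  qed
  have sum_insert: "(\<Sum>v\<in>insert c (w ` L). scale (k v) v)
      = scale (k c) c + (\<Sum>l\<in>L. scale (k (w l)) (w l))" for k
    using c_notin L sum.reindex[OF inj, of "\<lambda>v. scale (k v) v"] by simp
  show "independent (insert c (w ` L))"
  proof (rule independent_if_scalars_zero)
    show "finite (insert c (w ` L))" using L by simp
  next
    fix k v assume 0: "(\<Sum>v\<in>insert c (w ` L). scale (k v) v) = 0" and v: "v \<in> insert c (w ` L)"
    have "scale (k c) c + (\<Sum>l\<in>L. scale (k (w l)) (w l)) = 0"
      using 0 unfolding sum_insert .
    then have "k c = 0 \<and> (\<forall>l\<in>L. k (w l) = 0)"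
      using resolvent_relation_trivial[OF g L w notin c, of "k c" "\<lambda>l. k (w l)"] by simp
    then show "k v = 0" using v by auto
  qed
  show "card (insert c (w ` L)) = Suc (card L)"
    using c_notin L card_image[OF inj] by simp
qed

end

locale alternating_space = VS: finite_dimensional_vector_space scale Basis
  for scale :: "'a::field \<Rightarrow> 'v::ab_group_add \<Rightarrow> 'v" and Basis :: "'v set" +
  fixes s :: "'v \<Rightarrow> 'v \<Rightarrow> 'a"
  assumes bilinear: "bilinear_form scale s" and alternating [simp]: "\<And>x. s x x = 0"
begin

lemma s_right_hom: "module_hom scale (*) (s x)"
  using bilinear unfolding bilinear_form_def by (metis Vector_Spaces.linear.axioms(3))

lemma s_left_hom: "module_hom scale (*) (\<lambda>x. s x y)"
  using bilinear unfolding bilinear_form_def by (metis Vector_Spaces.linear.axioms(3))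

lemmas s_simps =
  module_hom.add[OF s_right_hom] module_hom.scale[OF s_right_hom] module_hom.diff[OF s_right_hom]
  module_hom.neg[OF s_right_hom] module_hom.sum[OF s_right_hom]
  module_hom.add[OF s_left_hom] module_hom.scale[OF s_left_hom] module_hom.diff[OF s_left_hom]
  module_hom.neg[OF s_left_hom] module_hom.sum[OF s_left_hom]

lemmas s_zero [simp] = module_hom.zero[OF s_right_hom] module_hom.zero[OF s_left_hom]

lemma s_antisym: "s a b = - s b a"
proof -
  have "s a b + s b a = s (a + b) (a + b)"
    using alternating[of a] alternating[of b] by (simp add: s_simps add.commute del: alternating)
  then show ?thesis by (simp add: eq_neg_iff_add_eq_0)
qed

lemma subspace_orthogonal: "VS.subspace U \<Longrightarrow> VS.subspace {z\<in>U. \<forall>a\<in>A. s a z = 0}"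
  unfolding VS.subspace_def by (simp add: s_simps)

lemma orthogonal_spans:
  assumes "\<And>a b. a \<in> A \<Longrightarrow> b \<in> B \<Longrightarrow> s a b = 0" and "a \<in> VS.span A" and "b \<in> VS.span B"
  shows "s a b = 0"
proof -
  have left: "VS.subspace {a. s a b = 0}" and right: "VS.subspace {b. s a b = 0}" for a b
    unfolding VS.subspace_def by (simp_all add: s_simps)
  have "s a' b = 0" if "a' \<in> VS.span A" "b \<in> B" for a' b
    using VS.span_minimal[OF _ left[of b]] assms(1) that by blast
  then show ?thesis using VS.span_minimal[OF _ right[of a]] assms(2,3) by blast
qed

definition nondegenerate_on :: "'v set \<Rightarrow> bool" where
  "nondegenerate_on W \<longleftrightarrow> (\<forall>z\<in>W. (\<forall>y\<in>W. s z y = 0) \<longrightarrow> z = 0)"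

lemma dual_vector_exists:
  assumes U: "VS.subspace U" and nd: "nondegenerate_on U"
    and B: "finite B" "B \<subseteq> U" and e: "e \<in> U" "e \<notin> VS.span B"
    and y: "\<And>b. b \<in> B \<Longrightarrow> y b \<in> U"
    and dual: "\<And>b b'. b \<in> B \<Longrightarrow> b' \<in> B \<Longrightarrow> s b' (y b) = (if b' = b then 1 else 0)"
  obtains z where "z \<in> U" "s e z = 1" "\<And>b. b \<in> B \<Longrightarrow> s b z = 0"
proof -
  define e' where "e' = e - (\<Sum>b\<in>B. scale (s e (y b)) b)"
  have "e' \<in> U" unfolding e'_def
    using B e y by (intro VS.subspace_diff[OF U] VS.subspace_sum[OF U] VS.subspace_scale[OF U]) auto
  moreover have "e' \<noteq> 0"
  proof
    assume "e' = 0"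
    then have "e = (\<Sum>b\<in>B. scale (s e (y b)) b)" unfolding e'_def by simp
    also have "\<dots> \<in> VS.span B" by (intro VS.span_sum VS.span_scale VS.span_base) auto
    finally show False using e(2) by simp
  qed
  ultimately obtain z where z: "z \<in> U" "s e' z \<noteq> 0" using nd unfolding nondegenerate_on_def by auto
  \<comment> \<open>Gram--Schmidt against the dual pair \<open>(B, y)\<close>.\<close>
  define z' where "z' = z - (\<Sum>b\<in>B. scale (s b z) (y b))"
  have z'_U: "z' \<in> U" unfolding z'_def
    using y z by (intro VS.subspace_diff[OF U] VS.subspace_sum[OF U] VS.subspace_scale[OF U]) auto
  have z'_B: "s b z' = 0" if "b \<in> B" for b
  proof -
    have "(\<Sum>b'\<in>B. s b' z * s b (y b')) = (\<Sum>b'\<in>B. if b = b' then s b' z else 0)"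
      using dual that by (intro sum.cong) auto
    then show ?thesis unfolding z'_def using that B(1) by (simp add: s_simps)
  qed
  have "s e z' = s e' z"
    unfolding z'_def e'_def by (simp add: s_simps mult.commute)
  then have "s e z' \<noteq> 0" using z by simp
  then show thesis
    using that[of "scale (1 / s e z') z'"] VS.subspace_scale[OF U z'_U] z'_B by (simp add: s_simps)
qed

lemma dual_family_exists:
  assumes U: "VS.subspace U" and nd: "nondegenerate_on U"
    and "finite B" "VS.independent B" "B \<subseteq> U"
  shows "\<exists>y. (\<forall>b\<in>B. y b \<in> U) \<and> (\<forall>b\<in>B. \<forall>b'\<in>B. s b' (y b) = (if b' = b then 1 else 0))"
  using assms(3-5)
proof (induction B rule: finite_induct)
  case empty
  then show ?case by simp
next
  case (insert e B)
  have "VS.independent B" and e_B: "e \<notin> VS.span B"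
    using insert.prems(1) insert.hyps(2) VS.independent_insert by auto
  then obtain y where y: "\<forall>b\<in>B. y b \<in> U"
    and dual: "\<forall>b\<in>B. \<forall>b'\<in>B. s b' (y b) = (if b' = b then 1 else 0)"
    using insert.IH insert.prems(2) by auto
  obtain z where z: "z \<in> U" "s e z = 1" "\<And>b. b \<in> B \<Longrightarrow> s b z = 0"
    by (rule dual_vector_exists[OF U nd insert.hyps(1) _ _ e_B, of y]) (use y dual insert.prems(2) in auto)
  define y' where "y' b = (if b = e then z else y b - scale (s e (y b)) z)" for b
  have "y' b \<in> U" if "b \<in> insert e B" for b
    using that y z(1) unfolding y'_def
    by (auto intro!: VS.subspace_diff[OF U] VS.subspace_scale[OF U])
  moreover have "s b' (y' b) = (if b' = b then 1 else 0)" if "b \<in> insert e B" "b' \<in> insert e B" for b b'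
    using that z dual insert.hyps(2) unfolding y'_def by (auto simp: s_simps)
  ultimately show ?case by blast
qed

lemma dual_family_coeff:
  assumes "finite B" "b' \<in> B" and dual: "\<And>b. b \<in> B \<Longrightarrow> s b' (y b) = (if b' = b then 1 else 0)"
  shows "s b' (\<Sum>b\<in>B. scale (u b) (y b)) = u b'"
proof -
  have "s b' (\<Sum>b\<in>B. scale (u b) (y b)) = (\<Sum>b\<in>B. u b * s b' (y b))"
    by (simp add: s_simps)
  also have "\<dots> = (\<Sum>b\<in>B. if b' = b then u b else 0)"
    using dual by (intro sum.cong) auto
  finally show ?thesis using assms(1,2) by simp
qed

lemma dual_family_independent:
  assumes B: "finite B"
    and dual: "\<And>b b'. b \<in> B \<Longrightarrow> b' \<in> B \<Longrightarrow> s b' (y b) = (if b' = b then 1 else 0)"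
  shows "inj_on y B" and "VS.independent (y ` B)"
proof -
  show inj: "inj_on y B"
  proof
    fix b b' assume "b \<in> B" "b' \<in> B" "y b = y b'"
    then show "b = b'" using dual[of b b] dual[of b' b] by (auto split: if_splits)
  qed
  show "VS.independent (y ` B)"
  proof (rule VS.independent_if_scalars_zero)
    show "finite (y ` B)" using B by simp
  next
    fix u v assume 0: "(\<Sum>v\<in>y ` B. scale (u v) v) = 0" and "v \<in> y ` B"
    then obtain b where b: "b \<in> B" "v = y b" by auto
    have "u v = s b (\<Sum>b\<in>B. scale (u (y b)) (y b))"
      using dual_family_coeff[OF B b(1), of y "\<lambda>b. u (y b)"] dual b by simp
    also have "\<dots> = 0" using 0 sum.reindex[OF inj, of "\<lambda>v. scale (u v) v"] by simp
    finally show "u v = 0" .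
  qed
qed

lemma dim_add_dim_le_if_orthogonal:
  assumes U: "VS.subspace U" and nd: "nondegenerate_on U"
    and E: "VS.subspace E" "E \<subseteq> U" and G: "VS.subspace G" "G \<subseteq> U"
    and orth: "\<And>e g. e \<in> E \<Longrightarrow> g \<in> G \<Longrightarrow> s e g = 0"
  shows "VS.dim E + VS.dim G \<le> VS.dim U"
proof -
  obtain BG where BG: "BG \<subseteq> G" "VS.independent BG" "G \<subseteq> VS.span BG" "card BG = VS.dim G"
    using VS.basis_exists by blast
  have BG_fin: "finite BG" using BG(2) VS.finiteI_independent by blast
  obtain y where y: "\<forall>b\<in>BG. y b \<in> U"
    and dual: "\<forall>b\<in>BG. \<forall>b'\<in>BG. s b' (y b) = (if b' = b then 1 else 0)"
    using dual_family_exists[OF U nd BG_fin BG(2)] BG(1) G(2) by auto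
  have inj: "inj_on y BG" and Y_ind: "VS.independent (y ` BG)"
    using dual_family_independent[OF BG_fin] dual by auto
  define Y where "Y = VS.span (y ` BG)"
  have "VS.dim Y = VS.dim G"
    using VS.dim_span_eq_card_independent[OF Y_ind] card_image[OF inj] BG(4) unfolding Y_def by simp
  moreover have "VS.dim (E \<inter> Y) = 0"
    unfolding VS.dim_eq_0
  proof
    fix z assume z: "z \<in> E \<inter> Y"
    then obtain u where "z = (\<Sum>v\<in>y ` BG. scale (u v) v)"
      using VS.span_finite[of "y ` BG"] BG_fin unfolding Y_def by auto
    then have z_u: "z = (\<Sum>b\<in>BG. scale (u (y b)) (y b))"
      using sum.reindex[OF inj, of "\<lambda>v. scale (u v) v"] by simp
    have "u (y b) = 0" if b: "b \<in> BG" for b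
    proof -
      have "u (y b) = s b z" using dual_family_coeff[OF BG_fin b, of y] dual b z_u by simp
      also have "\<dots> = - s z b" by (rule s_antisym)
      also have "\<dots> = 0" using orth z b BG(1) by auto
      finally show ?thesis .
    qed
    then show "z \<in> {0}" using z_u by simp
  qed
  moreover have "VS.dim {a + b |a b. a \<in> E \<and> b \<in> Y} \<le> VS.dim U"
    using E(2) y VS.span_minimal[OF _ U, of "y ` BG"] VS.subspace_add[OF U] unfolding Y_def
    by (intro VS.dim_subset) blast
  ultimately show ?thesis
    using VS.dim_sums_Int[OF E(1) VS.subspace_span, of "y ` BG"] unfolding Y_def by linarith
qed

end

context alternating_space
begin

sublocale FS: vector_space "fun_scale scale"
  unfolding vector_space_def fun_scale_def
  by (auto simp: fun_eq_iff VS.scale_right_distrib VS.scale_left_distrib)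

lemma vector_space_pair_fun_vec: "vector_space_pair (fun_scale scale) scale"
  by (intro vector_space_pair.intro FS.vector_space_axioms VS.vector_space_axioms)

lemma vector_space_pair_fun_fun: "vector_space_pair (fun_scale scale) (fun_scale scale)"
  by (intro vector_space_pair.intro FS.vector_space_axioms)

lemma vector_space_pair_vec_fun: "vector_space_pair scale (fun_scale scale)"
  by (intro vector_space_pair.intro FS.vector_space_axioms VS.vector_space_axioms)

lemma evaluation_linear: "Vector_Spaces.linear (fun_scale scale) scale (\<lambda>f. f x)"
  unfolding Vector_Spaces.linear_iff
  by (simp add: FS.vector_space_axioms VS.vector_space_axioms fun_scale_def)

text \<open>An element of \<open>A\<^sub>s\<close> of the subspace \<open>W\<close> with trivial spectrum, extended by \<open>0\<close>
  outside \<open>W\<close>, so that such maps for all subspaces live in the one function space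
  \<open>'v \<Rightarrow> 'v\<close>.\<close>
definition alt_trivial_spectrum_on :: "'v set \<Rightarrow> ('v \<Rightarrow> 'v) \<Rightarrow> bool" where
  "alt_trivial_spectrum_on W f \<longleftrightarrow>
     (\<forall>z. z \<notin> W \<longrightarrow> f z = 0) \<and> (\<exists>g. Vector_Spaces.linear scale scale g \<and> (\<forall>z\<in>W. f z = g z)) \<and>
     (\<forall>z\<in>W. f z \<in> W \<and> s z (f z) = 0 \<and> (\<forall>c. c \<noteq> 0 \<longrightarrow> z \<noteq> 0 \<longrightarrow> f z \<noteq> scale c z))"

context
  fixes W f assumes f: "alt_trivial_spectrum_on W f"
begin

lemma alt_trivial_spectrum_on_outside: "z \<notin> W \<Longrightarrow> f z = 0"
  using f unfolding alt_trivial_spectrum_on_def by blast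

lemma alt_trivial_spectrum_on_linear:
  obtains g where "Vector_Spaces.linear scale scale g" "\<And>z. z \<in> W \<Longrightarrow> f z = g z"
  using f unfolding alt_trivial_spectrum_on_def by blast

lemma alt_trivial_spectrum_on_maps_into: "z \<in> W \<Longrightarrow> f z \<in> W"
  using f unfolding alt_trivial_spectrum_on_def by blast

lemma alt_trivial_spectrum_on_alternating: "z \<in> W \<Longrightarrow> s z (f z) = 0"
  using f unfolding alt_trivial_spectrum_on_def by blast

lemma alt_trivial_spectrum_on_no_eigenvector: "z \<in> W \<Longrightarrow> c \<noteq> 0 \<Longrightarrow> z \<noteq> 0 \<Longrightarrow> f z \<noteq> scale c z"
  using f unfolding alt_trivial_spectrum_on_def by blast

lemma alt_trivial_spectrum_on_polar:
  assumes W: "VS.subspace W" and "a \<in> W" "b \<in> W"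
  shows "s a (f b) = - s b (f a)"
proof -
  obtain g where g: "Vector_Spaces.linear scale scale g" "\<And>z. z \<in> W \<Longrightarrow> f z = g z"
    using alt_trivial_spectrum_on_linear by blast
  interpret g: Vector_Spaces.linear scale scale g by (rule g(1))
  have ab: "a + b \<in> W" using W assms(2,3) VS.subspace_add by blast
  have "0 = s (a + b) (f (a + b))" using alt_trivial_spectrum_on_alternating[OF ab] by simp
  also have "\<dots> = s a (f a) + s b (f a) + (s a (f b) + s b (f b))"
    using g(2) assms(2,3) ab by (simp add: g.add s_simps)
  finally have "s b (f a) + s a (f b) = 0"
    using alt_trivial_spectrum_on_alternating assms(2,3) by simp
  then show ?thesis by (simp add: eq_neg_iff_add_eq_0 add.commute)
qed

lemma alt_trivial_spectrum_on_shift_surj: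
  assumes W: "VS.subspace W" and l: "l \<noteq> 0" and c: "c \<in> W"
  obtains w where "w \<in> W" "scale l w - f w = c"
proof -
  obtain g where g: "Vector_Spaces.linear scale scale g" "\<And>z. z \<in> W \<Longrightarrow> f z = g z"
    using alt_trivial_spectrum_on_linear by blast
  interpret g: Vector_Spaces.linear scale scale g by (rule g(1))
  define G where "G z = scale l z - g z" for z
  have G: "Vector_Spaces.linear scale scale G"
    unfolding G_def Vector_Spaces.linear_iff
    by (simp add: VS.vector_space_axioms g.add g.scale algebra_simps VS.scale_right_diff_distrib)
  interpret G: Vector_Spaces.linear scale scale G by (rule G)
  have "inj_on G W"
  proof (rule inj_onI)
    fix a b assume a: "a \<in> W" and b: "b \<in> W" and "G a = G b"
    then have "G (a - b) = 0" by (simp add: G.diff)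
    then have "f (a - b) = scale l (a - b)"
      using g(2)[OF VS.subspace_diff[OF W a b]] unfolding G_def by simp
    then show "a = b"
      using alt_trivial_spectrum_on_no_eigenvector[OF VS.subspace_diff[OF W a b] l] by auto
  qed
  then have "inj_on G (VS.span W)" using VS.span_eq_iff[THEN iffD2, OF W] by (simp only:)
  then have "VS.dim (G ` W) = VS.dim W"
    by (rule finite_dimensional_vector_space_pair_1.dim_image_eq[OF
        finite_dimensional_vector_space_pair_1.intro[OF
          VS.finite_dimensional_vector_space_axioms VS.vector_space_axioms] G])
  moreover have "G ` W \<subseteq> W"
    using alt_trivial_spectrum_on_maps_into g(2) W unfolding G_def
    by (auto intro!: VS.subspace_diff VS.subspace_scale)
  ultimately have "G ` W = W"
    using VS.subspace_dim_equal[OF G.subspace_image[OF W] W] by simp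
  then obtain w where "w \<in> W" "c = G w" using c by blast
  then show thesis using that g(2) unfolding G_def by simp
qed

lemma alt_trivial_spectrum_on_resolvent_orthogonal:
  assumes "w \<in> W" "scale l w - f w = c"
  shows "s c w = 0"
proof -
  have "s c w = - s (f w) w" unfolding assms(2)[symmetric] by (simp add: s_simps)
  also have "\<dots> = s w (f w)" using s_antisym[of "f w" w] by simp
  finally show ?thesis using alt_trivial_spectrum_on_alternating[OF assms(1)] by simp
qed

end

lemma alt_trivial_spectrum_on_UNIV:
  assumes "f \<in> alt_endos scale s" and "trivial_spectrum scale f"
  shows "alt_trivial_spectrum_on UNIV f"
  using assms unfolding alt_endos_def trivial_spectrum_def is_eigenvalue_def alt_trivial_spectrum_on_def
  by blast

end

locale symplectic_reduction = alternating_space scale Basis s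
  for scale :: "'a::field \<Rightarrow> 'v::ab_group_add \<Rightarrow> 'v" and Basis s +
  fixes W :: "'v set" and x y :: 'v and k :: nat
  assumes W: "VS.subspace W" and dim_W: "VS.dim W = 2 * Suc k" and nondeg_W: "nondegenerate_on W"
    and x: "x \<in> W" and y: "y \<in> W" and s_xy: "s x y = 1"
begin

definition W' :: "'v set" where
  "W' = {z\<in>W. s x z = 0 \<and> s y z = 0}"

definition proj :: "'v \<Rightarrow> 'v" where
  "proj z = z - scale (s z y) x + scale (s z x) y"

definition compress :: "('v \<Rightarrow> 'v) \<Rightarrow> 'v \<Rightarrow> 'v" where
  "compress f = (\<lambda>z. if z \<in> W' then proj (f z) else 0)"

definition wedge :: "'v \<Rightarrow> 'v \<Rightarrow> 'v" where
  "wedge c = (\<lambda>z. if z \<in> W then scale (s x z) c - scale (s c z) x else 0)"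

lemma s_yx: "s y x = -1"
  using s_antisym[of y x] s_xy by simp

lemma x_nonzero: "x \<noteq> 0" and y_nonzero: "y \<noteq> 0"
  using s_xy by auto

lemma proj_linear: "Vector_Spaces.linear scale scale proj"
  unfolding proj_def Vector_Spaces.linear_iff
  by (simp add: VS.vector_space_axioms s_simps algebra_simps VS.scale_right_diff_distrib
      VS.scale_left_distrib)

lemma W'_subset: "W' \<subseteq> W"
  unfolding W'_def by auto

lemma W'_subspace: "VS.subspace W'"
proof -
  have "W' = {z\<in>W. \<forall>a\<in>{x, y}. s a z = 0}" unfolding W'_def by auto
  then show ?thesis using subspace_orthogonal[OF W, of "{x, y}"] by simp
qed

lemma proj_in_W': "z \<in> W \<Longrightarrow> proj z \<in> W'"
  unfolding W'_def proj_def using x y W s_antisym[of z x] s_antisym[of z y] s_xy s_yx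
  by (auto simp: s_simps intro!: VS.subspace_add VS.subspace_diff VS.subspace_scale)

lemma proj_decomp: "z = proj z + scale (s z y) x - scale (s z x) y"
  unfolding proj_def by simp

lemma dim_x_y: "VS.dim {x, y} = 2"
proof -
  have "x \<notin> VS.span {y}"
  proof
    assume "x \<in> VS.span {y}"
    then obtain a where "x = scale a y" unfolding VS.span_singleton by auto
    then show False using s_xy by (simp add: s_simps)
  qed
  then show ?thesis using VS.dim_insert[of x "{y}"] y_nonzero by simp
qed

lemma dim_W': "VS.dim W' = 2 * k"
proof -
  have upper: "VS.dim (VS.span {x, y}) + VS.dim W' \<le> VS.dim W"
  proof (rule dim_add_dim_le_if_orthogonal[OF W nondeg_W VS.subspace_span _ W'_subspace W'_subset])
    show "VS.span {x, y} \<subseteq> W" using VS.span_minimal[OF _ W] x y by auto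
    show "s e g = 0" if "e \<in> VS.span {x, y}" "g \<in> W'" for e g
      by (rule orthogonal_spans[OF _ that(1) VS.span_base[OF that(2)]]) (auto simp: W'_def)
  qed
  have "W \<subseteq> {a + b |a b. a \<in> W' \<and> b \<in> VS.span {x, y}}"
  proof
    fix z assume z: "z \<in> W"
    have "z = proj z + (scale (s z y) x - scale (s z x) y)"
      using proj_decomp[of z] by (simp add: algebra_simps)
    moreover have "scale (s z y) x - scale (s z x) y \<in> VS.span {x, y}"
      by (intro VS.span_diff VS.span_scale VS.span_base) auto
    ultimately show "z \<in> {a + b |a b. a \<in> W' \<and> b \<in> VS.span {x, y}}"
      using proj_in_W'[OF z] by blast
  qed
  then have "VS.dim W \<le> VS.dim {a + b |a b. a \<in> W' \<and> b \<in> VS.span {x, y}}"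
    by (rule VS.dim_subset)
  also have "\<dots> \<le> VS.dim W' + VS.dim (VS.span {x, y})"
    using VS.dim_sums_Int[OF W'_subspace VS.subspace_span, of "{x, y}"] by linarith
  finally show ?thesis using upper dim_W dim_x_y by simp
qed

lemma nondegenerate_W': "nondegenerate_on W'"
  unfolding nondegenerate_on_def
proof (intro ballI impI)
  fix z assume z: "z \<in> W'" and orth: "\<forall>y\<in>W'. s z y = 0"
  have "s z w = 0" if w: "w \<in> W" for w
  proof -
    have "s z w = s z (proj w + scale (s w y) x - scale (s w x) y)"
      using proj_decomp[of w] by simp
    also have "\<dots> = s z (proj w) + s w y * s z x - s w x * s z y" by (simp add: s_simps)
    also have "\<dots> = 0"
      using orth proj_in_W'[OF w] z s_antisym[of z x] s_antisym[of z y] unfolding W'_def by simp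
    finally show ?thesis .
  qed
  then show "z = 0" using nondeg_W z W'_subset unfolding nondegenerate_on_def by auto
qed

lemma compress_linear: "Vector_Spaces.linear (fun_scale scale) (fun_scale scale) compress"
proof -
  interpret proj: Vector_Spaces.linear scale scale proj by (rule proj_linear)
  show ?thesis
    unfolding Vector_Spaces.linear_iff compress_def
    by (simp add: FS.vector_space_axioms fun_eq_iff fun_scale_def proj.add proj.scale)
qed

lemma wedge_linear: "Vector_Spaces.linear scale (fun_scale scale) wedge"
  unfolding Vector_Spaces.linear_iff wedge_def
  by (simp add: FS.vector_space_axioms VS.vector_space_axioms fun_eq_iff fun_scale_def s_simps
      algebra_simps VS.scale_right_diff_distrib VS.scale_left_distrib)

end

locale alt_space_reduction = symplectic_reduction scale Basis s W x y k
  for scale :: "'a::field \<Rightarrow> 'v::ab_group_add \<Rightarrow> 'v" and Basis s W x y k +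
  fixes R :: "('v \<Rightarrow> 'v) set"
  assumes R: "FS.subspace R" and R_alt: "\<And>f. f \<in> R \<Longrightarrow> alt_trivial_spectrum_on W f"
begin

definition R_x :: "('v \<Rightarrow> 'v) set" where
  "R_x = {f\<in>R. f x = 0}"

definition wedge_dirs :: "'v set" where
  "wedge_dirs = {c\<in>W'. wedge c \<in> R}"

lemma R_x_subspace: "FS.subspace R_x"
  unfolding R_x_def FS.subspace_def
  using FS.subspace_0[OF R] FS.subspace_add[OF R] FS.subspace_scale[OF R]
  by (auto simp: fun_scale_def)

lemma R_x_orthogonal_x:
  assumes "f \<in> R_x" "z \<in> W"
  shows "s x (f z) = 0"
  using alt_trivial_spectrum_on_polar[OF R_alt W x assms(2)] assms(1) unfolding R_x_def by simp

lemma compress_no_eigenvector: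
  assumes f: "f \<in> R_x" and z: "z \<in> W'" "z \<noteq> 0" and c: "c \<noteq> 0"
  shows "compress f z \<noteq> scale c z"
proof
  assume eq: "compress f z = scale c z"
  have fR: "f \<in> R" and fx: "f x = 0" using f unfolding R_x_def by auto
  obtain g where g: "Vector_Spaces.linear scale scale g" "\<And>z. z \<in> W \<Longrightarrow> f z = g z"
    using alt_trivial_spectrum_on_linear[OF R_alt[OF fR]] by blast
  interpret g: Vector_Spaces.linear scale scale g by (rule g(1))
  have zW: "z \<in> W" using z W'_subset by auto
  define \<alpha> where "\<alpha> = s (f z) y"
  have "s (f z) x = 0" using R_x_orthogonal_x[OF f zW] s_antisym[of "f z" x] by simp
  then have fz: "f z = scale c z + scale \<alpha> x"
    using proj_decomp[of "f z"] eq z(1) unfolding compress_def \<alpha>_def by simp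
  \<comment> \<open>Adding a multiple of \<open>x\<close>, which \<open>f\<close> kills, turns \<open>z\<close> into an eigenvector of \<open>f\<close>.\<close>
  define z' where "z' = z + scale (\<alpha> / c) x"
  have z'W: "z' \<in> W" unfolding z'_def using zW x W by (intro VS.subspace_add VS.subspace_scale) auto
  have "f z' = g z + scale (\<alpha> / c) (g x)"
    using g(2)[OF z'W] unfolding z'_def by (simp add: g.add g.scale)
  also have "\<dots> = scale c z'"
    using g(2)[OF zW] g(2)[OF x] fx fz c unfolding z'_def by (simp add: VS.scale_right_distrib)
  finally have "f z' = scale c z'" .
  moreover have "z' \<noteq> 0"
  proof
    assume "z' = 0"
    then have "\<alpha> / c = 0"
      using z(1) s_yx unfolding z'_def W'_def by (auto simp: s_simps dest: arg_cong[of _ _ "s y"])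
    then show False using \<open>z' = 0\<close> z(2) c unfolding z'_def by auto
  qed
  ultimately show False using alt_trivial_spectrum_on_no_eigenvector[OF R_alt[OF fR] z'W c] by simp
qed

lemma compress_alt:
  assumes f: "f \<in> R_x"
  shows "alt_trivial_spectrum_on W' (compress f)"
proof -
  have fR: "f \<in> R" using f unfolding R_x_def by simp
  obtain g where g: "Vector_Spaces.linear scale scale g" "\<And>z. z \<in> W \<Longrightarrow> f z = g z"
    using alt_trivial_spectrum_on_linear[OF R_alt[OF fR]] by blast
  have "s z (compress f z) = 0" if z: "z \<in> W'" for z
  proof -
    have "s z (compress f z) = s z (f z) - s (f z) y * s z x + s (f z) x * s z y"
      using z unfolding compress_def proj_def by (simp add: s_simps)
    also have "\<dots> = 0"
      using alt_trivial_spectrum_on_alternating[OF R_alt[OF fR]] z W'_subset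
        s_antisym[of z x] s_antisym[of z y] unfolding W'_def by auto
    finally show ?thesis .
  qed
  moreover have "compress f z \<in> W'" if "z \<in> W'" for z
    using that proj_in_W' alt_trivial_spectrum_on_maps_into[OF R_alt[OF fR]] W'_subset
    unfolding compress_def by auto
  moreover have "compress f z = (proj \<circ> g) z" if "z \<in> W'" for z
    using that g(2) W'_subset unfolding compress_def by auto
  moreover have "compress f z = 0" if "z \<notin> W'" for z
    using that unfolding compress_def by simp
  ultimately show ?thesis
    using Vector_Spaces.linear_compose[OF g(1) proj_linear] compress_no_eigenvector[OF f]
    unfolding alt_trivial_spectrum_on_def by blast
qed

lemma wedge_dirs_subspace: "VS.subspace wedge_dirs"
proof -
  interpret wedge: Vector_Spaces.linear scale "fun_scale scale" wedge by (rule wedge_linear)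
  show ?thesis
    unfolding VS.subspace_def wedge_dirs_def
    using FS.subspace_0[OF R] FS.subspace_add[OF R] FS.subspace_scale[OF R]
      VS.subspace_0[OF W'_subspace] VS.subspace_add[OF W'_subspace] VS.subspace_scale[OF W'_subspace]
    by (auto simp: wedge.add wedge.scale wedge.zero)
qed

lemma R_x_y_in_W':
  assumes "f \<in> R_x"
  shows "f y \<in> W'"
  using assms alt_trivial_spectrum_on_maps_into[OF R_alt y] R_x_orthogonal_x[OF assms y]
    alt_trivial_spectrum_on_alternating[OF R_alt y]
  unfolding W'_def R_x_def by simp

lemma compress_kernel_on_W':
  assumes f: "f \<in> R_x" and compress_f: "compress f = 0" and w: "w \<in> W'"
  shows "f w = scale (s w (f y)) x"
proof -
  have fR: "f \<in> R" using f unfolding R_x_def by simp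
  have wW: "w \<in> W" using w W'_subset by auto
  have "proj (f w) = 0" using fun_cong[OF compress_f, of w] w unfolding compress_def by simp
  moreover have "s (f w) x = 0" using R_x_orthogonal_x[OF f wW] s_antisym[of "f w" x] by simp
  moreover have "s (f w) y = s w (f y)"
    using s_antisym[of "f w" y] alt_trivial_spectrum_on_polar[OF R_alt[OF fR] W y wW] by simp
  ultimately show ?thesis using proj_decomp[of "f w"] by simp
qed

lemma compress_kernel_subset: "{f\<in>R_x. compress f = 0} \<subseteq> wedge ` wedge_dirs"
proof
  fix f assume "f \<in> {f\<in>R_x. compress f = 0}"
  then have f: "f \<in> R_x" and compress_f: "compress f = 0" by auto
  have fR: "f \<in> R" and fx: "f x = 0" using f unfolding R_x_def by auto
  note f_alt = R_alt[OF fR]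
  obtain g where g: "Vector_Spaces.linear scale scale g" "\<And>z. z \<in> W \<Longrightarrow> f z = g z"
    using alt_trivial_spectrum_on_linear[OF f_alt] by blast
  interpret g: Vector_Spaces.linear scale scale g by (rule g(1))
  define c where "c = f y"
  have c_W': "c \<in> W'" unfolding c_def by (rule R_x_y_in_W'[OF f])
  note f_W' = compress_kernel_on_W'[OF f compress_f, folded c_def]
  have "f z = wedge c z" for z
  proof (cases "z \<in> W")
    case False
    then show ?thesis using alt_trivial_spectrum_on_outside[OF f_alt False] unfolding wedge_def by simp
  next
    case True
    have pz: "proj z \<in> W'" using proj_in_W'[OF True] .
    have "f z = g (proj z + scale (s z y) x - scale (s z x) y)"
      using g(2)[OF True] proj_decomp[of z] by simp
    also have "\<dots> = g (proj z) + scale (s z y) (g x) - scale (s z x) (g y)"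
      by (simp add: g.add g.diff g.scale)
    also have "\<dots> = f (proj z) - scale (s z x) c"
      using g(2) pz W'_subset x y fx unfolding c_def by auto
    also have "\<dots> = scale (s (proj z) c) x - scale (s z x) c" using f_W'[OF pz] by simp
    also have "s (proj z) c = s z c" using c_W' unfolding proj_def W'_def by (simp add: s_simps)
    finally show ?thesis
      unfolding wedge_def using True s_antisym[of z c] s_antisym[of z x] by (simp add: algebra_simps)
  qed
  then have "f = wedge c" by auto
  then show "f \<in> wedge ` wedge_dirs" using c_W' fR unfolding wedge_dirs_def by auto
qed

lemma dim_compress_kernel_le: "FS.dim {f\<in>R_x. compress f = 0} \<le> VS.dim wedge_dirs"
proof -
  obtain B where B: "B \<subseteq> wedge_dirs" "VS.independent B" "wedge_dirs \<subseteq> VS.span B"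
      "card B = VS.dim wedge_dirs"
    using VS.basis_exists by blast
  have B_fin: "finite B" using B(2) VS.finiteI_independent by blast
  have "{f\<in>R_x. compress f = 0} \<subseteq> wedge ` VS.span B" using compress_kernel_subset B(3) by blast
  also have "\<dots> = FS.span (wedge ` B)"
    using vector_space_pair.linear_span_image[OF vector_space_pair_vec_fun wedge_linear] by simp
  finally have "FS.dim {f\<in>R_x. compress f = 0} \<le> card (wedge ` B)"
    using FS.dim_le_card B_fin by blast
  then show ?thesis using card_image_le[OF B_fin, of wedge] B(4) by simp
qed

lemma resolvent_orthogonal_x:
  assumes v: "v \<in> R" and c: "c \<in> wedge_dirs" and l: "l \<noteq> 0"
    and w: "w \<in> W" "scale l w - v w = c"
  shows "s x w = 0"
proof (rule ccontr)
  assume "s x w \<noteq> 0"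
  obtain g where g: "Vector_Spaces.linear scale scale g" "\<And>z. z \<in> W \<Longrightarrow> v z = g z"
    using alt_trivial_spectrum_on_linear[OF R_alt[OF v]] by blast
  interpret g: Vector_Spaces.linear scale scale g by (rule g(1))
  define t where "t = 1 / s x w"
  define z where "z = scale t w"
  define f where "f = v + fun_scale scale t (wedge c)"
  have fR: "f \<in> R"
    unfolding f_def using R v c unfolding wedge_dirs_def by (intro FS.subspace_add FS.subspace_scale) auto
  have zW: "z \<in> W" unfolding z_def using w(1) W VS.subspace_scale by blast
  have sxz: "s x z = 1" unfolding z_def t_def using \<open>s x w \<noteq> 0\<close> by (simp add: s_simps)
  have scz: "s c z = 0"
    unfolding z_def using alt_trivial_spectrum_on_resolvent_orthogonal[OF R_alt[OF v] w]
    by (simp add: s_simps)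
  \<comment> \<open>\<open>wedge c z = c\<close>, so \<open>f = v + t wedge c\<close> has the eigenvector \<open>z\<close> for \<open>l\<close>.\<close>
  have "f z = scale t (v w + c)"
    using g(2)[OF zW] g(2)[OF w(1)] zW sxz scz
    unfolding f_def fun_scale_def z_def wedge_def by (simp add: g.scale VS.scale_right_distrib)
  also have "v w + c = scale l w" using w(2) by (simp add: algebra_simps)
  finally have "f z = scale l z" unfolding z_def by (simp add: mult.commute)
  moreover have "z \<noteq> 0" using sxz by auto
  ultimately show False using alt_trivial_spectrum_on_no_eigenvector[OF R_alt[OF fR] zW l] by simp
qed

lemma dim_orthogonal_x_c_le:
  assumes c: "c \<in> W'" "c \<noteq> 0"
  shows "VS.dim {z\<in>W. s x z = 0 \<and> s c z = 0} \<le> 2 * k"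
proof -
  have "x \<notin> VS.span {c}"
  proof
    assume "x \<in> VS.span {c}"
    then obtain a where "x = scale a c" unfolding VS.span_singleton by auto
    then show False using c(1) s_yx unfolding W'_def by (simp add: s_simps)
  qed
  then have "VS.dim {x, c} = 2" using VS.dim_insert[of x "{c}"] c(2) by simp
  moreover have "VS.dim (VS.span {x, c}) + VS.dim {z\<in>W. s x z = 0 \<and> s c z = 0} \<le> VS.dim W"
  proof (rule dim_add_dim_le_if_orthogonal[OF W nondeg_W VS.subspace_span])
    show "VS.subspace {z\<in>W. s x z = 0 \<and> s c z = 0}" using subspace_orthogonal[OF W, of "{x, c}"] by simp
    show "VS.span {x, c} \<subseteq> W" using VS.span_minimal[OF _ W, of "{x, c}"] x c(1) W'_subset by auto
    show "{z\<in>W. s x z = 0 \<and> s c z = 0} \<subseteq> W" by auto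
    show "s e z = 0" if "e \<in> VS.span {x, c}" "z \<in> {z\<in>W. s x z = 0 \<and> s c z = 0}" for e z
      by (rule orthogonal_spans[OF _ that(1) VS.span_base[OF that(2)]]) auto
  qed
  ultimately show ?thesis using dim_W by simp
qed

lemma eval_orthogonal_wedge_dirs:
  assumes card: "infinite (UNIV :: 'a set) \<or> 2 * k < card (UNIV :: 'a set)"
    and v: "v \<in> R" and c: "c \<in> wedge_dirs"
  shows "s (v x) c = 0"
proof (cases "c = 0")
  case False
  note v_alt = R_alt[OF v]
  obtain g where g: "Vector_Spaces.linear scale scale g" "\<And>z. z \<in> W \<Longrightarrow> v z = g z"
    using alt_trivial_spectrum_on_linear[OF v_alt] by blast
  have c_W': "c \<in> W'" using c unfolding wedge_dirs_def by simp
  then have c_W: "c \<in> W" using W'_subset by auto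
  obtain L :: "'a set" where L: "finite L" "0 \<notin> L" "card L = 2 * k"
    using ex_nonzero_subset_card[OF card] by blast
  have "\<forall>l\<in>L. \<exists>w. w \<in> W \<and> scale l w - v w = c"
    using alt_trivial_spectrum_on_shift_surj[OF v_alt W _ c_W] L(2) by metis
  then obtain w where w: "\<And>l. l \<in> L \<Longrightarrow> w l \<in> W" "\<And>l. l \<in> L \<Longrightarrow> scale l (w l) - v (w l) = c"
    by metis
  define H where "H = {z\<in>W. s x z = 0 \<and> s c z = 0}"
  have "s x (w l) = 0" "s c (w l) = 0" if "l \<in> L" for l
    using resolvent_orthogonal_x[OF v c _ w(1,2)[OF that]]
      alt_trivial_spectrum_on_resolvent_orthogonal[OF v_alt w(1,2)[OF that]] L(2) that by auto
  moreover have "s x c = 0" using c_W' unfolding W'_def by simp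
  ultimately have H: "insert c (w ` L) \<subseteq> H" unfolding H_def using c_W w(1) by auto
  \<comment> \<open>\<open>c\<close> and the \<open>2k\<close> vectors \<open>w l = (l - v)\<inverse> c\<close> cannot be independent in \<open>H\<close>.\<close>
  have "g c \<in> VS.span (insert c (w ` L))"
  proof (rule ccontr)
    assume notin: "g c \<notin> VS.span (insert c (w ` L))"
    have "\<And>l. l \<in> L \<Longrightarrow> scale l (w l) - g (w l) = c" using w g(2) by auto
    note indep = VS.resolvent_family_independent[OF g(1) L(1) this notin False]
    have "Suc (2 * k) \<le> VS.dim H" using VS.independent_card_le_dim[OF H indep(1)] indep(2) L(3) by simp
    then show False using dim_orthogonal_x_c_le[OF c_W' False] unfolding H_def by simp
  qed
  moreover have "VS.span (insert c (w ` L)) \<subseteq> {z. s x z = 0}"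
    using H unfolding H_def by (intro VS.span_minimal) (auto simp: VS.subspace_def s_simps)
  ultimately have "s x (v c) = 0" using g(2)[OF c_W] by auto
  then show ?thesis using s_antisym[of "v x" c] alt_trivial_spectrum_on_polar[OF v_alt W c_W x] by simp
qed simp

lemma eval_x_orthogonal_wedge_dirs_x:
  assumes card: "infinite (UNIV :: 'a set) \<or> 2 * k < card (UNIV :: 'a set)"
    and a: "a \<in> insert x ((\<lambda>f. f x) ` R)" and b: "b \<in> insert x wedge_dirs"
  shows "s a b = 0"
proof -
  have "s x c = 0" if "c \<in> wedge_dirs" for c using that unfolding wedge_dirs_def W'_def by simp
  moreover have "s (f x) x = 0" if "f \<in> R" for f
    using s_antisym[of "f x" x] alt_trivial_spectrum_on_alternating[OF R_alt[OF that] x] by simp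
  ultimately show ?thesis using a b eval_orthogonal_wedge_dirs[OF card] by auto
qed

lemma dim_eval_add_dim_wedge_dirs_le:
  assumes card: "infinite (UNIV :: 'a set) \<or> 2 * k < card (UNIV :: 'a set)"
  shows "VS.dim ((\<lambda>f. f x) ` R) + VS.dim wedge_dirs \<le> 2 * k"
proof -
  define D where "D = (\<lambda>f. f x) ` R"
  have D: "VS.subspace D" unfolding D_def
    by (rule vector_space_pair.linear_subspace_image[OF vector_space_pair_fun_vec evaluation_linear R])
  have "x \<notin> D"
  proof
    assume "x \<in> D"
    then obtain f where "f \<in> R" "f x = scale 1 x" unfolding D_def by auto
    then show False using alt_trivial_spectrum_on_no_eigenvector[OF R_alt x one_neq_zero x_nonzero] by blast
  qed
  moreover have "x \<notin> wedge_dirs" using s_yx unfolding wedge_dirs_def W'_def by auto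
  moreover have "VS.dim (VS.span (insert x D)) + VS.dim (VS.span (insert x wedge_dirs)) \<le> VS.dim W"
  proof (rule dim_add_dim_le_if_orthogonal[OF W nondeg_W VS.subspace_span _ VS.subspace_span])
    show "VS.span (insert x D) \<subseteq> W"
      using VS.span_minimal[OF _ W, of "insert x D"] x alt_trivial_spectrum_on_maps_into[OF R_alt x]
      unfolding D_def by auto
    show "VS.span (insert x wedge_dirs) \<subseteq> W"
      using VS.span_minimal[OF _ W, of "insert x wedge_dirs"] x W'_subset unfolding wedge_dirs_def
      by auto
    show "s a b = 0" if "a \<in> VS.span (insert x D)" "b \<in> VS.span (insert x wedge_dirs)" for a b
      using orthogonal_spans[OF _ that] eval_x_orthogonal_wedge_dirs_x[OF card] unfolding D_def by blast
  qed
  ultimately show ?thesis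
    using VS.dim_insert VS.span_eq_iff[THEN iffD2, OF D] VS.span_eq_iff[THEN iffD2, OF wedge_dirs_subspace]
      dim_W unfolding D_def by simp
qed

lemma dim_le_dim_compress_image:
  assumes card: "infinite (UNIV :: 'a set) \<or> 2 * k < card (UNIV :: 'a set)"
  shows "FS.dim R \<le> 2 * k + FS.dim (compress ` R_x)"
proof -
  have "FS.dim R \<le> VS.dim ((\<lambda>f. f x) ` R) + FS.dim R_x"
    using vector_space_pair.dim_le_dim_image_add_dim_kernel[OF
        vector_space_pair_fun_vec evaluation_linear R]
    unfolding R_x_def .
  moreover have "FS.dim R_x \<le> FS.dim (compress ` R_x) + FS.dim {f\<in>R_x. compress f = 0}"
    by (rule vector_space_pair.dim_le_dim_image_add_dim_kernel[OF
          vector_space_pair_fun_fun compress_linear R_x_subspace])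
  ultimately show ?thesis
    using dim_compress_kernel_le dim_eval_add_dim_wedge_dirs_le[OF card] by linarith
qed

end

context alternating_space
begin

lemma dim_le_if_alt_trivial_spectrum:
  assumes "VS.subspace W" "VS.dim W = 2 * m" "nondegenerate_on W"
    and "infinite (UNIV :: 'a set) \<or> 2 * m \<le> card (UNIV :: 'a set) + 1"
    and "FS.subspace R" "\<And>f. f \<in> R \<Longrightarrow> alt_trivial_spectrum_on W f"
  shows "FS.dim R \<le> m * (m - 1)"
  using assms
proof (induction m arbitrary: W R)
  case 0
  have "f = 0" if f: "f \<in> R" for f
  proof
    fix z
    obtain g where g: "Vector_Spaces.linear scale scale g" "\<And>z. z \<in> W \<Longrightarrow> f z = g z"
      using alt_trivial_spectrum_on_linear[OF "0.prems"(6)[OF f]] by blast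
    interpret g: Vector_Spaces.linear scale scale g by (rule g(1))
    have "W \<subseteq> {0}" using "0.prems"(2) by simp
    then show "f z = 0 z"
      using g(2) alt_trivial_spectrum_on_outside[OF "0.prems"(6)[OF f], of z]
      by (cases "z \<in> W") (auto simp: g.zero)
  qed
  then have "R \<subseteq> FS.span {}" by auto
  then show ?case using FS.dim_le_card[of R "{}"] by simp
next
  case (Suc k)
  have "\<not> W \<subseteq> {0}" using Suc.prems(2) VS.dim_eq_0[of W] by auto
  then obtain x where x: "x \<in> W" "x \<noteq> 0" by blast
  then obtain y' where y': "y' \<in> W" "s x y' \<noteq> 0"
    using Suc.prems(3) unfolding nondegenerate_on_def by blast
  define y where "y = scale (1 / s x y') y'"
  have y: "y \<in> W" "s x y = 1"
    unfolding y_def using y' Suc.prems(1) VS.subspace_scale by (auto simp: s_simps)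
  interpret red: alt_space_reduction scale Basis s W x y k R
    using Suc.prems x y by unfold_locales auto
  have "FS.dim (red.compress ` red.R_x) \<le> k * (k - 1)"
  proof (rule Suc.IH[OF red.W'_subspace red.dim_W' red.nondegenerate_W'])
    show "infinite (UNIV :: 'a set) \<or> 2 * k \<le> card (UNIV :: 'a set) + 1" using Suc.prems(4) by auto
    show "FS.subspace (red.compress ` red.R_x)"
      by (rule vector_space_pair.linear_subspace_image[OF
            vector_space_pair_fun_fun red.compress_linear red.R_x_subspace])
    show "alt_trivial_spectrum_on red.W' f" if "f \<in> red.compress ` red.R_x" for f
      using that red.compress_alt by blast
  qed
  moreover have "FS.dim R \<le> 2 * k + FS.dim (red.compress ` red.R_x)"
    using red.dim_le_dim_compress_image Suc.prems(4) by auto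
  ultimately have "FS.dim R \<le> 2 * k + k * (k - 1)" by simp
  also have "\<dots> = Suc k * (Suc k - 1)" by (cases k) (simp_all add: algebra_simps)
  finally show ?case .
qed

end

theorem theorem2:
  fixes scale :: "'a::field \<Rightarrow> 'v::ab_group_add \<Rightarrow> 'v"
    and s :: "'v \<Rightarrow> 'v \<Rightarrow> 'a"
    and n :: nat
    and S :: "('v \<Rightarrow> 'v) set"
  assumes card_F: "infinite (UNIV :: 'a set) \<or> int (2 * n) - 1 \<le> int (card (UNIV :: 'a set))"
    and V: "vector_space scale"
    and fin_dim: "\<exists>B. finite B \<and> module.span scale B = UNIV"
    and dim_V: "vector_space.dim scale (UNIV :: 'v set) = 2 * n"
    and symp: "symplectic_form scale s"
    and S_sub: "S \<subseteq> alt_endos scale s"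
    and S_subspace: "module.subspace (fun_scale scale) S"
    and S_triv: "\<forall>u\<in>S. trivial_spectrum scale u"
  shows "vector_space.dim (fun_scale scale) S \<le> n * (n - 1)"
proof -
  interpret V: vector_space scale by (rule V)
  obtain Basis where "finite_dimensional_vector_space scale Basis"
    using fin_dim V.finite_dimensional_if_finite_span by blast
  then interpret alternating_space scale Basis s
    using symp unfolding symplectic_form_def alternating_form_def
    by (intro alternating_space.intro alternating_space_axioms.intro) auto
  show ?thesis
  proof (rule dim_le_if_alt_trivial_spectrum[OF V.subspace_UNIV dim_V _ _ S_subspace])
    show "nondegenerate_on UNIV"
      using symp unfolding symplectic_form_def nondegenerate_form_def nondegenerate_on_def by blast
    show "infinite (UNIV :: 'a set) \<or> 2 * n \<le> card (UNIV :: 'a set) + 1" using card_F by linarith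
    show "alt_trivial_spectrum_on UNIV f" if "f \<in> S" for f
      using alt_trivial_spectrum_on_UNIV S_sub S_triv that by blast
  qed
qed

end
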